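(* Let $x_1,\dots,x_n$ be fixed data, $2\le k\le n$, and $s$ a real-valued permutation-symmetric function of $k$ arguments. Let $(I_1,\dots,I_k)$ be uniformly distributed over all $k$-tuples of distinct indices in $\{1,\dots,n\}$, $X_i^*=x_{I_i}$, $s^*=s(X_1^*,\dots,X_k^* )$, $\mathcal{D}^*=\{I_1,\dots,I_k\}$, and with $\mathbb{E}_*,\mathrm{Cov}_*$ denoting expectation and covariance over this subsampling let $s_0=\mathbb{E}_*[s^*]$, $e_i=\mathbb{E}_*[s^*\mid I_1=i]$ and, for $i\ne j$, $e_{ij}=\mathbb{E}_*[s^*\mid I_1=i,I_2=j]$. For $i\ne j$ define $$w_{ij}^*=\mathbf{1}\{i,j\in\mathcal{D}^*\}-\frac{k-1}{n-1}\mathbf{1}\{i\in\mathcal{D}^*\}-\frac{k-1}{n-1}\mathbf{1}\{j\in\mathcal{D}^*\}+\frac{k(k-1)}{n(n-1)}.$$ Then $$\mathrm{Cov}_*(s^*,w_{ij}^* )=\frac{\binom{k}{2}}{\binom{n}{2}}\,(e_{ij}-e_i-e_j+s_0),$$ and consequently $$\mathrm{ps}\text{-}\mathrm{IJ}_\mathrm{U}(2):=\sum_{i<j}\mathrm{Cov}_*^2(s^*,w_{ij}^* )=\frac{\binom{k}{2}^2}{\binom{n}{2}^2}\sum_{i<j}(e_{ij}-e_i-e_j+s_0)^2.$$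
   Context: Subsampling is without replacement and conditional on the data. *)

theory Defs
  imports "HOL-Probability.Probability"
begin

definition pmf_cov :: "'b pmf \<Rightarrow> ('b \<Rightarrow> real) \<Rightarrow> ('b \<Rightarrow> real) \<Rightarrow> real" where
  "pmf_cov p X Y =
     measure_pmf.expectation p (\<lambda>w. (X w - measure_pmf.expectation p X) *
                                    (Y w - measure_pmf.expectation p Y))"

definition dtuples :: "nat \<Rightarrow> nat \<Rightarrow> nat list set" where
  "dtuples n k = {I. length I = k \<and> distinct I \<and> set I \<subseteq> {1..n}}"

definition subsamp :: "nat \<Rightarrow> nat \<Rightarrow> nat list pmf" where
  "subsamp n k = pmf_of_set (dtuples n k)"

definition sym_fun :: "nat \<Rightarrow> ('a list \<Rightarrow> real) \<Rightarrow> bool" where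
  "sym_fun k s \<longleftrightarrow> (\<forall>xs ys. length xs = k \<longrightarrow> mset xs = mset ys \<longrightarrow> s xs = s ys)"

definition wstar :: "nat \<Rightarrow> nat \<Rightarrow> nat \<Rightarrow> nat \<Rightarrow> nat list \<Rightarrow> real" where
  "wstar n k i j I =
     of_bool (i \<in> set I \<and> j \<in> set I)
     - (real k - 1) / (real n - 1) * of_bool (i \<in> set I)
     - (real k - 1) / (real n - 1) * of_bool (j \<in> set I)
     + real k * (real k - 1) / (real n * (real n - 1))"

end

theory Submission
  imports Defs "HOL-Combinatorics.Permutations"
begin

text \<open>
  Two symmetries of uniform subsampling without replacement drive the computation: permuting
  the positions of the sampled tuple, which leaves \<open>s\<^sup>*\<close> unchanged because \<open>s\<close> is symmetric,
  and relabelling the indices \<open>1..n\<close>. The first gives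
  \<open>E[s\<^sup>* 1{i \<in> D\<^sup>*}] = k E[s\<^sup>* 1{I\<^sub>1 = i}]\<close> and
  \<open>E[s\<^sup>* 1{i, j \<in> D\<^sup>*}] = k (k - 1) E[s\<^sup>* 1{I\<^sub>1 = i, I\<^sub>2 = j}]\<close>; the second shows
  \<open>P(I\<^sub>1 = i) = 1/n\<close> and \<open>P(I\<^sub>1 = i, I\<^sub>2 = j) = 1/(n (n - 1))\<close>. Since
  \<open>(k - 1)/(n - 1) \<cdot> k/n = k (k - 1)/(n (n - 1)) = C(k,2)/C(n,2)\<close>, the four terms of
  \<open>E[s\<^sup>* w\<^sub>i\<^sub>j\<^sup>*]\<close> combine to \<open>C(k,2)/C(n,2) (e\<^sub>i\<^sub>j - e\<^sub>i - e\<^sub>j + s\<^sub>0)\<close>. The same identity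
  for \<open>s = 1\<close> gives \<open>E[w\<^sub>i\<^sub>j\<^sup>*] = 0\<close>, so this expectation is the covariance.
\<close>

lemma of_nat_choose_two: "real (m choose 2) = real m * (real m - 1) / 2"
  by (induction m) (simp_all add: numeral_2_eq_2 field_simps)

lemma pmf_cov_eq:
  assumes "finite (set_pmf p)"
  shows "pmf_cov p X Y = measure_pmf.expectation p (\<lambda>w. X w * Y w)
           - measure_pmf.expectation p X * measure_pmf.expectation p Y"
  using assms by (simp add: pmf_cov_def algebra_simps integrable_measure_pmf_finite)

lemma cond_pmf_of_set:
  assumes "finite S" "S \<inter> A \<noteq> {}"
  shows "cond_pmf (pmf_of_set S) A = pmf_of_set (S \<inter> A)"
proof -
  have "S \<noteq> {}" using assms(2) by blast
  then have "set_pmf (pmf_of_set S) \<inter> A \<noteq> {}" using assms by simp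
  then show ?thesis
    using assms \<open>S \<noteq> {}\<close>
    by (intro pmf_eqI) (auto simp: pmf_cond measure_pmf_of_set indicator_def)
qed

lemma finite_dtuples: "finite (dtuples n k)"
proof (rule finite_subset)
  show "dtuples n k \<subseteq> {xs. set xs \<subseteq> {1..n} \<and> length xs = k}"
    by (auto simp: dtuples_def)
qed (simp add: finite_lists_length_eq)

lemma dtuples_nonempty: "k \<le> n \<Longrightarrow> dtuples n k \<noteq> {}"
proof -
  assume "k \<le> n"
  then have "[1..<k+1] \<in> dtuples n k" by (auto simp: dtuples_def)
  then show ?thesis by blast
qed

lemma nth_in_dtuples:
  assumes "I \<in> dtuples n k" "p < k"
  shows "I ! p \<in> {1..n}"
proof -
  have "I ! p \<in> set I" using assms by (simp add: dtuples_def)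
  then show ?thesis using assms(1) by (auto simp: dtuples_def)
qed

lemma expectation_subsamp:
  "k \<le> n \<Longrightarrow> measure_pmf.expectation (subsamp n k) f
     = (\<Sum>I\<in>dtuples n k. f I) / card (dtuples n k)"
  by (simp add: subsamp_def integral_pmf_of_set finite_dtuples dtuples_nonempty)

lemma expectation_cond_subsamp:
  fixes f :: "nat list \<Rightarrow> real"
  assumes "k \<le> n" and "(\<Sum>I\<in>dtuples n k. of_bool (P I)) \<noteq> (0::real)"
  shows "measure_pmf.expectation (cond_pmf (subsamp n k) {I. P I}) f
       = (\<Sum>I\<in>dtuples n k. f I * of_bool (P I)) / (\<Sum>I\<in>dtuples n k. of_bool (P I))"
proof -
  let ?D = "dtuples n k" and ?DP = "{I \<in> dtuples n k. P I}"
  have "?D \<inter> {I. P I} = ?DP" by auto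
  moreover have "?DP \<noteq> {}" using assms(2) by (auto intro: sum.neutral)
  ultimately have "measure_pmf.expectation (cond_pmf (subsamp n k) {I. P I}) f
      = sum f ?DP / card ?DP"
    by (simp add: subsamp_def cond_pmf_of_set finite_dtuples integral_pmf_of_set)
  also have "sum f ?DP = (\<Sum>I\<in>?D. f I * of_bool (P I))"
    unfolding sum.inter_filter[OF finite_dtuples] by (intro sum.cong) auto
  also have "real (card ?DP) = (\<Sum>I\<in>?D. of_bool (P I))"
    by (simp add: of_bool_def sum.If_cases finite_dtuples Int_def)
  finally show ?thesis .
qed

lemma sum_dtuples_permute_list:
  assumes "\<sigma> permutes {..<k}"
  shows "(\<Sum>I\<in>dtuples n k. F (permute_list \<sigma> I)) = (\<Sum>I\<in>dtuples n k. F I)"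
proof (rule sum.reindex_bij_witness[of _ "permute_list (inv \<sigma>)" "permute_list \<sigma>"])
  have inv: "inv \<sigma> permutes {..<k}" using assms by (rule permutes_inv)
  fix I assume "I \<in> dtuples n k"
  then have I: "length I = k" "distinct I" "set I \<subseteq> {1..n}" by (auto simp: dtuples_def)
  show "permute_list \<sigma> (permute_list (inv \<sigma>) I) = I"
    using permute_list_compose[where f = "inv \<sigma>" and g = \<sigma> and xs = I] assms I
    by (simp add: permutes_inv_o[OF assms])
  show "permute_list (inv \<sigma>) (permute_list \<sigma> I) = I"
    using permute_list_compose[where f = \<sigma> and g = "inv \<sigma>" and xs = I] inv I
    by (simp add: permutes_inv_o[OF assms])
  show "permute_list \<sigma> I \<in> dtuples n k" "permute_list (inv \<sigma>) I \<in> dtuples n k"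
    using assms inv I by (simp_all add: dtuples_def)
qed simp

lemma sum_dtuples_map_permutes:
  assumes "\<pi> permutes {1..n}"
  shows "(\<Sum>I\<in>dtuples n k. F (map \<pi> I)) = (\<Sum>I\<in>dtuples n k. F I)"
proof (rule sum.reindex_bij_witness[of _ "map (inv \<pi>)" "map \<pi>"])
  have inv: "inv \<pi> permutes {1..n}" using assms by (rule permutes_inv)
  fix I assume "I \<in> dtuples n k"
  then have I: "length I = k" "distinct I" "set I \<subseteq> {1..n}" by (auto simp: dtuples_def)
  show "map \<pi> (map (inv \<pi>) I) = I" "map (inv \<pi>) (map \<pi> I) = I"
    using permutes_inverses[OF assms] by (simp_all add: comp_def)
  show "map \<pi> I \<in> dtuples n k" "map (inv \<pi>) I \<in> dtuples n k"
    using I permutes_in_image[OF assms] permutes_in_image[OF inv]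
      permutes_inj_on[OF assms] permutes_inj_on[OF inv]
    by (auto simp: dtuples_def distinct_map inj_on_subset)
qed simp

lemma sym_fun_map:
  assumes "sym_fun k s"
  shows "sym_fun k (\<lambda>I. s (map x I))"
  using assms unfolding sym_fun_def by (metis length_map mset_map)

lemma sym_fun_permute_list:
  assumes "sym_fun k f" "\<sigma> permutes {..<k}" "length I = k"
  shows "f (permute_list \<sigma> I) = f I"
  using assms unfolding sym_fun_def by (metis mset_permute_list)

lemma sum_dtuples_sym_mult_permute_list:
  assumes "sym_fun k f" "\<sigma> permutes {..<k}"
  shows "(\<Sum>I\<in>dtuples n k. f I * G (permute_list \<sigma> I)) = (\<Sum>I\<in>dtuples n k. f I * G I)"
proof -
  have "(\<Sum>I\<in>dtuples n k. f I * G (permute_list \<sigma> I))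
      = (\<Sum>I\<in>dtuples n k. f (permute_list \<sigma> I) * G (permute_list \<sigma> I))"
    by (intro sum.cong refl) (simp add: sym_fun_permute_list[OF assms] dtuples_def)
  also have "\<dots> = (\<Sum>I\<in>dtuples n k. f I * G I)"
    by (rule sum_dtuples_permute_list[OF assms(2)])
  finally show ?thesis .
qed

lemma of_bool_mem_distinct:
  assumes "distinct xs"
  shows "(of_bool (a \<in> set xs) :: 'b::semiring_1) = (\<Sum>p<length xs. of_bool (xs ! p = a))"
proof (cases "a \<in> set xs")
  case True
  then obtain p where p: "p < length xs" "xs ! p = a" by (auto simp: in_set_conv_nth)
  have "(\<Sum>q<length xs. of_bool (xs ! q = a)) = (\<Sum>q<length xs. of_bool (q = p) :: 'b)"
    using assms p by (intro sum.cong refl) (auto simp: nth_eq_iff_index_eq)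
  with True p show ?thesis by simp
next
  case False
  then show ?thesis by (auto simp: in_set_conv_nth)
qed

lemma of_bool_mem2_distinct:
  assumes "distinct xs" "a \<noteq> b"
  shows "(of_bool (a \<in> set xs \<and> b \<in> set xs) :: 'c::comm_semiring_1)
       = (\<Sum>p<length xs. \<Sum>q\<in>{..<length xs} - {p}. of_bool (xs ! p = a \<and> xs ! q = b))"
proof -
  have "(of_bool (a \<in> set xs \<and> b \<in> set xs) :: 'c)
      = (\<Sum>p<length xs. \<Sum>q<length xs. of_bool (xs ! p = a \<and> xs ! q = b))"
    unfolding of_bool_conj of_bool_mem_distinct[OF assms(1)] by (rule sum_product)
  also have "\<dots> = (\<Sum>p<length xs. \<Sum>q\<in>{..<length xs} - {p}. of_bool (xs ! p = a \<and> xs ! q = b))"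
  proof (rule sum.cong[OF refl])
    fix p assume "p \<in> {..<length xs}"
    then show "(\<Sum>q<length xs. of_bool (xs ! p = a \<and> xs ! q = b) :: 'c)
        = (\<Sum>q\<in>{..<length xs} - {p}. of_bool (xs ! p = a \<and> xs ! q = b))"
      using assms(2) by (subst sum.remove[of _ p]) auto
  qed
  finally show ?thesis .
qed

lemma sum_dtuples_mem:
  assumes "sym_fun k f"
  shows "(\<Sum>I\<in>dtuples n k. f I * of_bool (i \<in> set I))
       = real k * (\<Sum>I\<in>dtuples n k. f I * of_bool (I ! 0 = i))"
proof -
  have "(\<Sum>I\<in>dtuples n k. f I * of_bool (i \<in> set I))
      = (\<Sum>p<k. \<Sum>I\<in>dtuples n k. f I * of_bool (I ! p = i))"
    by (subst sum.swap)
       (auto simp: dtuples_def of_bool_mem_distinct sum_distrib_left intro!: sum.cong)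
  also have "\<dots> = (\<Sum>p<k. \<Sum>I\<in>dtuples n k. f I * of_bool (I ! 0 = i))"
  proof (rule sum.cong[OF refl])
    fix p assume p: "p \<in> {..<k}"
    then have \<sigma>: "Transposition.transpose 0 p permutes {..<k}" by (intro permutes_swap_id) auto
    have "(\<Sum>I\<in>dtuples n k. f I * of_bool (I ! p = i))
        = (\<Sum>I\<in>dtuples n k. f I * of_bool (permute_list (Transposition.transpose 0 p) I ! 0 = i))"
      using \<sigma> p by (intro sum.cong refl) (auto simp: dtuples_def permute_list_nth)
    also have "\<dots> = (\<Sum>I\<in>dtuples n k. f I * of_bool (I ! 0 = i))"
      by (rule sum_dtuples_sym_mult_permute_list[OF assms \<sigma>])
    finally show "(\<Sum>I\<in>dtuples n k. f I * of_bool (I ! p = i))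
        = (\<Sum>I\<in>dtuples n k. f I * of_bool (I ! 0 = i))" .
  qed
  finally show ?thesis by simp
qed

lemma sum_dtuples_mem2:
  assumes "sym_fun k f" "i \<noteq> j"
  shows "(\<Sum>I\<in>dtuples n k. f I * of_bool (i \<in> set I \<and> j \<in> set I))
       = real k * (real k - 1) * (\<Sum>I\<in>dtuples n k. f I * of_bool (I ! 0 = i \<and> I ! 1 = j))"
proof -
  let ?B = "\<Sum>I\<in>dtuples n k. f I * of_bool (I ! 0 = i \<and> I ! 1 = j)"
  have "(\<Sum>I\<in>dtuples n k. f I * of_bool (i \<in> set I \<and> j \<in> set I))
      = (\<Sum>I\<in>dtuples n k. \<Sum>p<k. \<Sum>q\<in>{..<k} - {p}. f I * of_bool (I ! p = i \<and> I ! q = j))"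
  proof (rule sum.cong[OF refl])
    fix I assume "I \<in> dtuples n k"
    then have "distinct I" "length I = k" by (auto simp: dtuples_def)
    then show "f I * of_bool (i \<in> set I \<and> j \<in> set I)
        = (\<Sum>p<k. \<Sum>q\<in>{..<k} - {p}. f I * of_bool (I ! p = i \<and> I ! q = j))"
      unfolding of_bool_mem2_distinct[OF \<open>distinct I\<close> assms(2)] \<open>length I = k\<close>
      by (simp only: sum_distrib_left)
  qed
  also have "\<dots> = (\<Sum>p<k. \<Sum>q\<in>{..<k} - {p}.
                       \<Sum>I\<in>dtuples n k. f I * of_bool (I ! p = i \<and> I ! q = j))"
    by (subst sum.swap) (rule sum.cong[OF refl sum.swap])
  also have "\<dots> = (\<Sum>p<k. \<Sum>q\<in>{..<k} - {p}. ?B)"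
  proof (rule sum.cong[OF refl], rule sum.cong[OF refl])
    fix p q assume p: "p \<in> {..<k}" and q: "q \<in> {..<k} - {p}"
    define \<sigma> where "\<sigma> = Transposition.transpose 0 p
                            \<circ> Transposition.transpose 1 (Transposition.transpose 0 p q)"
    have \<sigma>: "\<sigma> permutes {..<k}" "\<sigma> 0 = p" "\<sigma> 1 = q"
      using p q by (auto simp: \<sigma>_def Transposition.transpose_def
                         intro!: permutes_compose permutes_swap_id)
    have "(\<Sum>I\<in>dtuples n k. f I * of_bool (I ! p = i \<and> I ! q = j))
        = (\<Sum>I\<in>dtuples n k.
             f I * of_bool (permute_list \<sigma> I ! 0 = i \<and> permute_list \<sigma> I ! 1 = j))"
      using \<sigma> p q by (intro sum.cong refl) (auto simp: dtuples_def permute_list_nth)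
    also have "\<dots> = ?B"
      by (rule sum_dtuples_sym_mult_permute_list[OF assms(1) \<sigma>(1)])
    finally show "(\<Sum>I\<in>dtuples n k. f I * of_bool (I ! p = i \<and> I ! q = j)) = ?B" .
  qed
  also have "\<dots> = real k * (real k - 1) * ?B"
    by (cases k) (simp_all add: card_Diff_singleton)
  finally show ?thesis .
qed

lemma sum_of_bool_dtuples_nth0:
  assumes "1 \<le> k" "i \<in> {1..n}"
  shows "real n * (\<Sum>I\<in>dtuples n k. of_bool (I ! 0 = i)) = card (dtuples n k)"
proof -
  have same: "(\<Sum>I\<in>dtuples n k. of_bool (I ! 0 = a)) = (\<Sum>I\<in>dtuples n k. of_bool (I ! 0 = i) :: real)"
    if a: "a \<in> {1..n}" for a
  proof -
    have \<pi>: "Transposition.transpose a i permutes {1..n}"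
      using a assms(2) by (rule permutes_swap_id)
    have "(\<Sum>I\<in>dtuples n k. of_bool (I ! 0 = a) :: real)
        = (\<Sum>I\<in>dtuples n k. of_bool (map (Transposition.transpose a i) I ! 0 = i))"
      using assms(1) by (intro sum.cong refl) (auto simp: dtuples_def Transposition.transpose_def)
    also have "\<dots> = (\<Sum>I\<in>dtuples n k. of_bool (I ! 0 = i))"
      by (rule sum_dtuples_map_permutes[OF \<pi>])
    finally show ?thesis .
  qed
  have "real n * (\<Sum>I\<in>dtuples n k. of_bool (I ! 0 = i))
      = (\<Sum>a\<in>{1..n}. \<Sum>I\<in>dtuples n k. of_bool (I ! 0 = a))"
    by (simp add: same)
  also have "\<dots> = (\<Sum>I\<in>dtuples n k. \<Sum>a\<in>{1..n}. of_bool (I ! 0 = a))"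
    by (rule sum.swap)
  also have "\<dots> = (\<Sum>I\<in>dtuples n k. 1)"
  proof (rule sum.cong[OF refl])
    fix I assume "I \<in> dtuples n k"
    then have "I ! 0 \<in> {1..n}" by (rule nth_in_dtuples) (use assms(1) in simp)
    then show "(\<Sum>a\<in>{1..n}. of_bool (I ! 0 = a)) = (1::real)" by simp
  qed
  finally show ?thesis by simp
qed

lemma sum_of_bool_dtuples_nth01:
  assumes "2 \<le> k" "i \<in> {1..n}" "j \<in> {1..n}" "i \<noteq> j"
  shows "real n * (real n - 1) * (\<Sum>I\<in>dtuples n k. of_bool (I ! 0 = i \<and> I ! 1 = j))
       = card (dtuples n k)"
proof -
  let ?c = "\<lambda>b. \<Sum>I\<in>dtuples n k. of_bool (I ! 0 = i \<and> I ! 1 = b) :: real"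
  have same: "?c b = ?c j" if b: "b \<in> {1..n}" "b \<noteq> i" for b
  proof -
    have \<pi>: "Transposition.transpose b j permutes {1..n}"
      using b(1) assms(3) by (rule permutes_swap_id)
    have "?c b = (\<Sum>I\<in>dtuples n k. of_bool (map (Transposition.transpose b j) I ! 0 = i
                                         \<and> map (Transposition.transpose b j) I ! 1 = j))"
      using assms(1,4) b(2) by (intro sum.cong refl) (auto simp: dtuples_def Transposition.transpose_def)
    also have "\<dots> = ?c j"
      by (rule sum_dtuples_map_permutes[OF \<pi>])
    finally show ?thesis .
  qed
  have diag: "?c i = 0"
  proof (intro sum.neutral ballI)
    fix I assume "I \<in> dtuples n k"
    then have "I ! 0 \<noteq> I ! 1" using assms(1) by (auto simp: dtuples_def nth_eq_iff_index_eq)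
    then show "of_bool (I ! 0 = i \<and> I ! 1 = i) = (0::real)" by auto
  qed
  have "(\<Sum>I\<in>dtuples n k. of_bool (I ! 0 = i) :: real)
      = (\<Sum>I\<in>dtuples n k. \<Sum>b\<in>{1..n}. of_bool (I ! 0 = i \<and> I ! 1 = b))"
  proof (rule sum.cong[OF refl])
    fix I assume "I \<in> dtuples n k"
    then have "I ! 1 \<in> {1..n}" by (rule nth_in_dtuples) (use assms(1) in simp)
    then show "(of_bool (I ! 0 = i) :: real) = (\<Sum>b\<in>{1..n}. of_bool (I ! 0 = i \<and> I ! 1 = b))"
      by (simp add: of_bool_conj sum_distrib_left[symmetric])
  qed
  also have "\<dots> = (\<Sum>b\<in>{1..n}. ?c b)"
    by (rule sum.swap)
  also have "\<dots> = ?c i + (\<Sum>b\<in>{1..n} - {i}. ?c b)"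
    using assms(2) by (intro sum.remove) auto
  also have "\<dots> = (\<Sum>b\<in>{1..n} - {i}. ?c j)"
    unfolding diag by (simp only: add_0_left, rule sum.cong[OF refl], rule same) auto
  also have "\<dots> = (real n - 1) * ?c j"
    using assms(2) by (simp add: of_nat_diff)
  finally show ?thesis
    using sum_of_bool_dtuples_nth0[OF _ assms(2), of k] assms(1) by (simp add: mult.assoc)
qed

lemma expectation_cond_subsamp_nth0:
  fixes f :: "nat list \<Rightarrow> real"
  assumes "1 \<le> k" "k \<le> n" "i \<in> {1..n}"
  shows "measure_pmf.expectation (cond_pmf (subsamp n k) {I. I ! 0 = i}) f
       = real n * (\<Sum>I\<in>dtuples n k. f I * of_bool (I ! 0 = i)) / card (dtuples n k)"
proof -
  define c where "c = real n"
  have "c * (\<Sum>I\<in>dtuples n k. of_bool (I ! 0 = i)) = card (dtuples n k)"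
    unfolding c_def by (rule sum_of_bool_dtuples_nth0[OF assms(1,3)])
  moreover have "c > 0" "card (dtuples n k) > 0"
    using assms finite_dtuples dtuples_nonempty[OF assms(2)] by (auto simp: c_def card_gt_0_iff)
  ultimately have "(\<Sum>I\<in>dtuples n k. of_bool (I ! 0 = i)) = card (dtuples n k) / c"
    by (simp add: field_simps)
  with \<open>c > 0\<close> \<open>card (dtuples n k) > 0\<close> show ?thesis
    unfolding c_def[symmetric] by (simp add: expectation_cond_subsamp[OF assms(2)])
qed

lemma expectation_cond_subsamp_nth01:
  fixes f :: "nat list \<Rightarrow> real"
  assumes "2 \<le> k" "k \<le> n" "i \<in> {1..n}" "j \<in> {1..n}" "i \<noteq> j"
  shows "measure_pmf.expectation (cond_pmf (subsamp n k) {I. I ! 0 = i \<and> I ! 1 = j}) f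
       = real n * (real n - 1) * (\<Sum>I\<in>dtuples n k. f I * of_bool (I ! 0 = i \<and> I ! 1 = j))
           / card (dtuples n k)"
proof -
  \<comment> \<open>An opaque \<open>c\<close>: the simplifier would rewrite \<open>real n - 1 \<noteq> 0\<close> into a form
      that \<open>field_simps\<close> can no longer use to clear the denominator.\<close>
  define c where "c = real n * (real n - 1)"
  have "c * (\<Sum>I\<in>dtuples n k. of_bool (I ! 0 = i \<and> I ! 1 = j)) = card (dtuples n k)"
    unfolding c_def by (rule sum_of_bool_dtuples_nth01[OF assms(1,3-5)])
  moreover have "c > 0" "card (dtuples n k) > 0"
    using assms finite_dtuples dtuples_nonempty[OF assms(2)] by (auto simp: c_def card_gt_0_iff)
  ultimately have "(\<Sum>I\<in>dtuples n k. of_bool (I ! 0 = i \<and> I ! 1 = j)) = card (dtuples n k) / c"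
    by (simp add: field_simps)
  with \<open>c > 0\<close> \<open>card (dtuples n k) > 0\<close> show ?thesis
    unfolding c_def[symmetric] by (simp add: expectation_cond_subsamp[OF assms(2)])
qed

lemma sum_dtuples_mult_wstar:
  fixes f :: "nat list \<Rightarrow> real"
  assumes f: "sym_fun k f" and n: "2 \<le> n" and ij: "i \<noteq> j"
  shows "(\<Sum>I\<in>dtuples n k. f I * wstar n k i j I)
       = real k * (real k - 1) / (real n * (real n - 1)) *
           (real n * (real n - 1) * (\<Sum>I\<in>dtuples n k. f I * of_bool (I ! 0 = i \<and> I ! 1 = j))
            - real n * (\<Sum>I\<in>dtuples n k. f I * of_bool (I ! 0 = i))
            - real n * (\<Sum>I\<in>dtuples n k. f I * of_bool (I ! 0 = j))
            + (\<Sum>I\<in>dtuples n k. f I))"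
proof -
  let ?D = "dtuples n k"
  define b where "b = real k * (real k - 1) / (real n * (real n - 1))"
  have "f I * wstar n k i j I
      = f I * of_bool (i \<in> set I \<and> j \<in> set I)
        - (real k - 1) / (real n - 1) * (f I * of_bool (i \<in> set I))
        - (real k - 1) / (real n - 1) * (f I * of_bool (j \<in> set I))
        + b * f I" for I
    unfolding wstar_def b_def by (simp only: algebra_simps)
  then have "(\<Sum>I\<in>?D. f I * wstar n k i j I)
      = (\<Sum>I\<in>?D. f I * of_bool (i \<in> set I \<and> j \<in> set I))
        - (real k - 1) / (real n - 1) * (\<Sum>I\<in>?D. f I * of_bool (i \<in> set I))
        - (real k - 1) / (real n - 1) * (\<Sum>I\<in>?D. f I * of_bool (j \<in> set I))
        + b * (\<Sum>I\<in>?D. f I)"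
    by (simp only: sum.distrib sum_subtractf sum_distrib_left)
  also have "\<dots> = real k * (real k - 1) * (\<Sum>I\<in>?D. f I * of_bool (I ! 0 = i \<and> I ! 1 = j))
        - (real k - 1) / (real n - 1) * real k * (\<Sum>I\<in>?D. f I * of_bool (I ! 0 = i))
        - (real k - 1) / (real n - 1) * real k * (\<Sum>I\<in>?D. f I * of_bool (I ! 0 = j))
        + b * (\<Sum>I\<in>?D. f I)"
    unfolding sum_dtuples_mem[OF f] sum_dtuples_mem2[OF f ij] by (simp only: mult.assoc)
  also have "real k * (real k - 1) = b * (real n * (real n - 1))"
    using n by (simp add: b_def)
  also have "(real k - 1) / (real n - 1) * real k = b * real n"
    using n unfolding b_def by (simp add: field_simps)
  finally show ?thesis
    unfolding b_def[symmetric] by (simp add: algebra_simps)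
qed

lemma expectation_subsamp_mult_wstar:
  fixes f :: "nat list \<Rightarrow> real"
  assumes f: "sym_fun k f" and k: "2 \<le> k" "k \<le> n"
    and ij: "i \<in> {1..n}" "j \<in> {1..n}" "i \<noteq> j"
  shows "measure_pmf.expectation (subsamp n k) (\<lambda>I. f I * wstar n k i j I)
       = real k * (real k - 1) / (real n * (real n - 1)) *
           (measure_pmf.expectation (cond_pmf (subsamp n k) {I. I ! 0 = i \<and> I ! 1 = j}) f
            - measure_pmf.expectation (cond_pmf (subsamp n k) {I. I ! 0 = i}) f
            - measure_pmf.expectation (cond_pmf (subsamp n k) {I. I ! 0 = j}) f
            + measure_pmf.expectation (subsamp n k) f)"
proof -
  define b where "b = real k * (real k - 1) / (real n * (real n - 1))"
  have k1: "1 \<le> k" and n: "2 \<le> n" using k by simp_all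
  have "card (dtuples n k) > 0"
    using finite_dtuples dtuples_nonempty[OF k(2)] by (simp add: card_gt_0_iff)
  then show ?thesis
    unfolding expectation_subsamp[OF k(2)] expectation_cond_subsamp_nth01[OF k ij]
      expectation_cond_subsamp_nth0[OF k1 k(2) ij(1)] expectation_cond_subsamp_nth0[OF k1 k(2) ij(2)]
      sum_dtuples_mult_wstar[OF f n ij(3)] b_def[symmetric]
    by (simp add: field_simps)
qed

theorem proposition2:
  fixes x :: "nat \<Rightarrow> 'a" and s :: "'a list \<Rightarrow> real" and n k :: nat
  assumes "2 \<le> k" and "k \<le> n" and "sym_fun k s"
  defines "sstar \<equiv> (\<lambda>I. s (map x I))"
  defines "s0 \<equiv> measure_pmf.expectation (subsamp n k) sstar"
  defines "e1 \<equiv> (\<lambda>i. measure_pmf.expectation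
                      (cond_pmf (subsamp n k) {I. I ! 0 = i}) sstar)"
  defines "e2 \<equiv> (\<lambda>i j. measure_pmf.expectation
                      (cond_pmf (subsamp n k) {I. I ! 0 = i \<and> I ! 1 = j}) sstar)"
  shows "(\<forall>i\<in>{1..n}. \<forall>j\<in>{1..n}. i \<noteq> j \<longrightarrow>
            pmf_cov (subsamp n k) sstar (wstar n k i j) =
              real (k choose 2) / real (n choose 2) * (e2 i j - e1 i - e1 j + s0))
       \<and> (\<Sum>(i,j)\<in>{(i,j). i \<in> {1..n} \<and> j \<in> {1..n} \<and> i < j}.
            (pmf_cov (subsamp n k) sstar (wstar n k i j))\<^sup>2) =
          (real (k choose 2))\<^sup>2 / (real (n choose 2))\<^sup>2 *
            (\<Sum>(i,j)\<in>{(i,j). i \<in> {1..n} \<and> j \<in> {1..n} \<and> i < j}.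
               (e2 i j - e1 i - e1 j + s0)\<^sup>2)"
proof -
  have sym: "sym_fun k sstar"
    unfolding sstar_def by (rule sym_fun_map[OF assms(3)])
  have fin: "finite (set_pmf (subsamp n k))"
    using assms(2) by (simp add: subsamp_def finite_dtuples dtuples_nonempty)
  have cov: "pmf_cov (subsamp n k) sstar (wstar n k i j)
      = real (k choose 2) / real (n choose 2) * (e2 i j - e1 i - e1 j + s0)"
    if ij: "i \<in> {1..n}" "j \<in> {1..n}" "i \<noteq> j" for i j
  proof -
    have "measure_pmf.expectation (subsamp n k) (wstar n k i j) = 0"
      using expectation_subsamp_mult_wstar[of k "\<lambda>_. 1", OF _ assms(1,2) ij]
      by (simp add: sym_fun_def)
    then have "pmf_cov (subsamp n k) sstar (wstar n k i j)
        = measure_pmf.expectation (subsamp n k) (\<lambda>I. sstar I * wstar n k i j I)"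
      by (simp add: pmf_cov_eq[OF fin])
    also have "\<dots> = real k * (real k - 1) / (real n * (real n - 1)) * (e2 i j - e1 i - e1 j + s0)"
      unfolding e1_def e2_def s0_def by (rule expectation_subsamp_mult_wstar[OF sym assms(1,2) ij])
    also have "real k * (real k - 1) / (real n * (real n - 1))
        = real (k choose 2) / real (n choose 2)"
      by (simp add: of_nat_choose_two)
    finally show ?thesis .
  qed
  then show ?thesis
    by (auto simp: power_mult_distrib power_divide sum_distrib_left intro!: sum.cong)
qed

end
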